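(* For every positive integer $k$, \[ \sum_{i+t\le\lfloor k/2\rfloor}B_{2t}\,2^{2t}\binom{2k+2}{2t,\;2i+1,\;2k-2t-2i+1}=(k+1)\left(2^{2k}+(-1)^k\binom{2k}{k}\right), \] where the sum ranges over all pairs of nonnegative integers $i,t$ with $i+t\le\lfloor k/2\rfloor$.
   Context: The Bernoulli numbers $B_m$ ($m\ge 0$) are defined by $\dfrac{x}{e^x-1}=\sum_{m=0}^\infty B_m\dfrac{x^m}{m!}$. The trinomial coefficient is $\binom{n}{r_1,r_2,r_3}=\dfrac{n!}{r_1!\,r_2!\,r_3!}$ for nonnegative integers $r_1+r_2+r_3=n$. *)

theory Defs
  imports Complex_Main "HOL-Computational_Algebra.Formal_Power_Series"
begin

definition bernoulli :: "nat \<Rightarrow> real" where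
  "bernoulli m = fact m * fps_nth (fps_X / (fps_exp 1 - 1)) m"

definition trinomial :: "nat \<Rightarrow> nat \<Rightarrow> nat \<Rightarrow> nat \<Rightarrow> nat" where
  "trinomial n r1 r2 r3 = fact n div (fact r1 * fact r2 * fact r3)"

end

theory Submission
  imports Defs
begin

unbundle fps_syntax

text \<open>With \<open>B(x) = x/(e\<^sup>x - 1)\<close>, the series \<open>D(x) = B(2x) + x = x coth x\<close> has the even coefficients
  \<open>4\<^sup>t B\<^sub>2\<^sub>t / (2t)!\<close>, and \<open>D(x) sinh x = x cosh x\<close>. Comparing the coefficients of \<open>x\<^sup>2\<^sup>s\<^sup>+\<^sup>1\<close> shows that
  the terms with \<open>i + t = s\<close> add up to \<open>(2k+2) C(2k+1, 2s)\<close>. By Pascal's rule the sum of these over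
  \<open>s \<le> \<lfloor>k/2\<rfloor>\<close> is \<open>(2k+2)\<close> times the sum of \<open>C(2k, v)\<close> over \<open>v \<le> 2\<lfloor>k/2\<rfloor>\<close>, which by the symmetry of
  the row is \<open>(4\<^sup>k \<plusminus> C(2k, k))/2\<close> according to the parity of \<open>k\<close>.\<close>

lemma sum_pairs_le_by_antidiagonals:
  fixes f :: "nat \<Rightarrow> nat \<Rightarrow> 'a::comm_monoid_add"
  shows "(\<Sum>(i, t) \<in> {(i, t). i + t \<le> m}. f i t) = (\<Sum>s\<le>m. \<Sum>t\<le>s. f (s - t) t)"
proof -
  have "{(i, t). i + t \<le> m} = (\<lambda>(s, t). (s - t, t)) ` (SIGMA s:{..m}. {..s})"
    by (force simp: image_iff)
  moreover have "inj_on (\<lambda>(s, t). (s - t, t)) (SIGMA s:{..m}. {..s})"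
    by (auto simp: inj_on_def)
  ultimately show ?thesis
    by (simp add: sum.reindex sum.Sigma case_prod_unfold)
qed

lemma sum_atMost_odd_eq_sum_evens:
  fixes f :: "nat \<Rightarrow> 'a::comm_monoid_add"
  assumes "\<And>j. odd j \<Longrightarrow> f j = 0"
  shows "(\<Sum>j\<le>2*s+1. f j) = (\<Sum>t\<le>s. f (2*t))"
proof -
  have "(\<Sum>j\<le>2*s+1. f j) = (\<Sum>j\<in>{j\<in>{..2*s+1}. even j}. f j)"
    by (rule sum.mono_neutral_right) (auto simp: assms)
  also have "{j\<in>{..2*s+1}. even j} = (\<lambda>t. 2*t) ` {..s}"
    by (auto elim!: evenE)
  also have "(\<Sum>j\<in>(\<lambda>t. 2*t) ` {..s}. f j) = (\<Sum>t\<le>s. f (2*t))"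
    by (simp add: sum.reindex inj_on_def)
  finally show ?thesis .
qed

lemma sum_choose_Suc_even: "(\<Sum>s\<le>m. Suc n choose (2*s)) = (\<Sum>v\<le>2*m. n choose v)"
proof (induction m)
  case (Suc m)
  have "(\<Sum>s\<le>Suc m. Suc n choose (2*s))
      = (\<Sum>v\<le>2*m. n choose v) + (n choose Suc (2*m)) + (n choose Suc (Suc (2*m)))"
    using Suc.IH by (simp add: binomial_Suc_Suc[of n "Suc (2*m)", simplified])
  then show ?case by simp
qed simp

lemma sum_choose_below_middle: "2 * (\<Sum>v<k. (2*k) choose v) + ((2*k) choose k) = 4^k"
proof -
  have upper: "(\<Sum>v\<in>{Suc k..2*k}. (2*k) choose v) = (\<Sum>v<k. (2*k) choose v)"
    by (rule sum.reindex_bij_witness[where i="\<lambda>v. 2*k - v" and j="\<lambda>v. 2*k - v"])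
       (auto simp: binomial_symmetric[symmetric])
  have "{..2*k} = insert k ({..<k} \<union> {Suc k..2*k})" by auto
  then have "(\<Sum>v\<le>2*k. (2*k) choose v)
      = (\<Sum>v<k. (2*k) choose v) + ((2*k) choose k) + (\<Sum>v\<in>{Suc k..2*k}. (2*k) choose v)"
    by (simp add: add_ac) (subst sum.union_disjoint; auto)
  then show ?thesis
    by (simp add: upper choose_row_sum power_mult)
qed

lemma sum_choose_upto_even_floor_half:
  "2 * real (\<Sum>v\<le>2*(k div 2). (2*k) choose v) = 2^(2*k) + (-1)^k * real ((2*k) choose k)"
proof -
  have middle: "2 * real (\<Sum>v<k. (2*k) choose v) + real ((2*k) choose k) = 4^k"
    using arg_cong[OF sum_choose_below_middle[of k], of real] by simp
  show ?thesis
  proof (cases "even k")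
    case True
    then have "{..2*(k div 2)} = insert k {..<k}" by auto
    with True show ?thesis using middle by (simp add: power_mult)
  next
    case False
    then have "{..2*(k div 2)} = {..<k}" by (auto elim!: oddE)
    with False show ?thesis using middle by (simp add: power_mult)
  qed
qed

lemma real_of_trinomial:
  assumes "r1 + r2 + r3 = n"
  shows "real (trinomial n r1 r2 r3) = fact n / (fact r1 * fact r2 * fact r3)"
proof -
  have "fact r1 * fact r2 * fact r3 dvd (fact (r1 + r2) * fact r3 :: nat)"
    by (intro mult_dvd_mono fact_fact_dvd_fact) simp
  also have "\<dots> dvd fact n"
    using assms fact_fact_dvd_fact[of "r1 + r2" r3] by simp
  finally show ?thesis
    unfolding trinomial_def by (simp add: real_of_nat_div)
qed

definition bernoulli_egf :: "real fps" where
  "bernoulli_egf = fps_X / (fps_exp 1 - 1)"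

lemma bernoulli_eq_egf_nth: "bernoulli m = fact m * bernoulli_egf $ m"
  by (simp add: bernoulli_def bernoulli_egf_def)

lemma bernoulli_egf_mult: "bernoulli_egf * (fps_exp 1 - 1) = fps_X"
proof -
  have "subdegree (fps_exp (1::real) - 1) = 1"
    by (rule subdegreeI) auto
  moreover from this have "fps_exp (1::real) - 1 \<noteq> 0"
    by (metis subdegree_0 zero_neq_one)
  ultimately show ?thesis
    unfolding bernoulli_egf_def by (intro fps_times_divide_eq) simp_all
qed

definition fps_x_coth :: "real fps" where
  "fps_x_coth = (bernoulli_egf oo (fps_const 2 * fps_X)) + fps_X"

lemma fps_x_coth_nth_even: "fps_x_coth $ (2*t) = 4^t * bernoulli (2*t) / fact (2*t)"
  by (simp add: fps_x_coth_def bernoulli_eq_egf_nth power_mult)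

lemma fps_x_coth_mult_sinh:
  "fps_x_coth * (fps_exp 1 - fps_exp (-1)) = fps_X * (fps_exp 1 + fps_exp (-1))"
proof -
  have "(bernoulli_egf * (fps_exp 1 - 1)) oo (fps_const 2 * fps_X) = fps_X oo (fps_const 2 * fps_X)"
    by (simp add: bernoulli_egf_mult)
  then have "(bernoulli_egf oo (fps_const 2 * fps_X)) * (fps_exp 2 - 1) = fps_const 2 * fps_X"
    by (simp add: fps_compose_mult_distrib fps_compose_sub_distrib)
  then have "fps_x_coth * (fps_exp 2 - 1) * fps_exp (-1) = fps_X * (fps_exp 2 + 1) * fps_exp (-1)"
    by (simp add: fps_x_coth_def algebra_simps flip: numeral_fps_const)
  moreover have "fps_exp (2::real) * fps_exp (-1) = fps_exp 1"
    by (simp flip: fps_exp_add_mult)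
  ultimately show ?thesis
    by (simp add: algebra_simps)
qed

lemma fps_exp_minus_exp_neg_nth:
  "(fps_exp 1 - fps_exp (-1) :: real fps) $ n = (if odd n then 2 / fact n else 0)"
  by (simp add: diff_divide_distrib)

lemma sum_x_coth_nth_div_fact:
  "(\<Sum>t\<le>s. fps_x_coth $ (2*t) / fact (2*s+1-2*t)) = 1 / fact (2*s)"
proof -
  have "(fps_x_coth * (fps_exp 1 - fps_exp (-1))) $ (2*s+1)
      = (\<Sum>j\<le>2*s+1. fps_x_coth $ j * (fps_exp 1 - fps_exp (-1)) $ (2*s+1-j))"
    by (simp add: fps_mult_nth atLeast0AtMost)
  also have "\<dots> = (\<Sum>t\<le>s. 2 * (fps_x_coth $ (2*t) / fact (2*s+1-2*t)))"
    by (subst sum_atMost_odd_eq_sum_evens) (auto simp: fps_exp_minus_exp_neg_nth mult.commute)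
  also have "\<dots> = 2 * (\<Sum>t\<le>s. fps_x_coth $ (2*t) / fact (2*s+1-2*t))"
    by (simp only: sum_distrib_left)
  finally show ?thesis
    by (simp add: fps_x_coth_mult_sinh)
qed

lemma sum_bernoulli_trinomial_antidiagonal:
  assumes "2*s \<le> k"
  shows "(\<Sum>t\<le>s. bernoulli (2*t) * 2^(2*t) *
            real (trinomial (2*k+2) (2*t) (2*(s-t)+1) (2*k - 2*t - 2*(s-t) + 1)))
         = real (2*k+2) * real ((2*k+1) choose (2*s))"
proof -
  have summand: "bernoulli (2*t) * 2^(2*t) *
        real (trinomial (2*k+2) (2*t) (2*(s-t)+1) (2*k - 2*t - 2*(s-t) + 1))
      = fact (2*k+2) / fact (2*k+1-2*s) * (fps_x_coth $ (2*t) / fact (2*s+1-2*t))"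
    if "t \<le> s" for t
  proof -
    have index_eqs: "2*(s-t)+1 = 2*s+1-2*t" "2*k - 2*t - 2*(s-t) + 1 = 2*k+1-2*s"
      using that assms by simp_all
    have "real (trinomial (2*k+2) (2*t) (2*s+1-2*t) (2*k+1-2*s))
        = fact (2*k+2) / (fact (2*t) * fact (2*s+1-2*t) * fact (2*k+1-2*s))"
      using that assms by (intro real_of_trinomial) simp
    then show ?thesis
      unfolding index_eqs fps_x_coth_nth_even power_mult by (simp add: field_simps del: fact_Suc)
  qed
  have "(\<Sum>t\<le>s. bernoulli (2*t) * 2^(2*t) *
            real (trinomial (2*k+2) (2*t) (2*(s-t)+1) (2*k - 2*t - 2*(s-t) + 1)))
      = (\<Sum>t\<le>s. fact (2*k+2) / fact (2*k+1-2*s) * (fps_x_coth $ (2*t) / fact (2*s+1-2*t)))"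
    by (intro sum.cong refl summand) simp
  also have "\<dots> = fact (2*k+2) / fact (2*k+1-2*s) * (1 / fact (2*s))"
    by (simp only: sum_x_coth_nth_div_fact flip: sum_distrib_left)
  also have "\<dots> = real (2*k+2) * real ((2*k+1) choose (2*s))"
  proof -
    have "real ((2*k+1) choose (2*s)) = fact (2*k+1) / (fact (2*s) * fact (2*k+1-2*s))"
      using assms by (intro binomial_fact) simp
    moreover have "(fact (2*k+2) :: real) = real (2*k+2) * fact (2*k+1)"
      using fact_Suc[of "2*k+1", where 'a = real] by (simp add: algebra_simps)
    ultimately show ?thesis
      by simp
  qed
  finally show ?thesis .
qed

theorem lemma1:
  fixes k :: nat
  assumes "k \<ge> 1"
  shows "(\<Sum>(i, t) \<in> {(i, t). i + t \<le> k div 2}.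
            bernoulli (2 * t) * 2 ^ (2 * t) *
            real (trinomial (2 * k + 2) (2 * t) (2 * i + 1) (2 * k - 2 * t - 2 * i + 1)))
         = real (k + 1) * (2 ^ (2 * k) + (-1) ^ k * real (2 * k choose k))"
proof -
  have "(\<Sum>(i, t) \<in> {(i, t). i + t \<le> k div 2}.
            bernoulli (2 * t) * 2 ^ (2 * t) *
            real (trinomial (2 * k + 2) (2 * t) (2 * i + 1) (2 * k - 2 * t - 2 * i + 1)))
      = (\<Sum>s\<le>k div 2. real (2*k+2) * real ((2*k+1) choose (2*s)))"
    unfolding sum_pairs_le_by_antidiagonals
    by (intro sum.cong refl sum_bernoulli_trinomial_antidiagonal) auto
  also have "\<dots> = real (k+1) * (2 * real (\<Sum>v\<le>2*(k div 2). (2*k) choose v))"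
    by (simp add: sum_choose_Suc_even flip: sum_distrib_left of_nat_sum)
  also have "\<dots> = real (k + 1) * (2 ^ (2 * k) + (-1) ^ k * real (2 * k choose k))"
    by (simp only: sum_choose_upto_even_floor_half)
  finally show ?thesis .
qed

end
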